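(* Fix $\beta>0$, $d\ge1$, and a finite nonempty index set $T$. For each $t\in T$ and $j\in\{1,\dots,d\}$ let $\mu^{t,\mathrm{lo}}_j,\mu^{t,\mathrm{hi}}_j\in\mathbb{R}$, and let $L^t_j\sim\mathrm{MaxGumbel}(\mu^{t,\mathrm{lo}}_j,\beta)$ and $U^t_j\sim\mathrm{MinGumbel}(\mu^{t,\mathrm{hi}}_j,\beta)$, all of these $2d|T|$ random variables being mutually independent. Consider the random boxes $B^t=\prod_{j=1}^d[L^t_j,U^t_j]$ and the Lebesgue volume of their intersection, $V=\prod_{j=1}^d\max\big(\min_{t\in T}U^t_j-\max_{t\in T}L^t_j,\,0\big)$. Then $$\mathbb{E}[V]=\prod_{j=1}^d m\!\left(-\beta\,\mathrm{LogSumExp}_{t\in T}\!\Big(-\tfrac{\mu^{t,\mathrm{hi}}_j}{\beta}\Big)-\beta\,\mathrm{LogSumExp}_{t\in T}\!\Big(\tfrac{\mu^{t,\mathrm{lo}}_j}{\beta}\Big)\right),$$ where $m(x)=2\beta K_0\!\left(2e^{-x/(2\beta)}\right)$.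
   Context: $\mathrm{MaxGumbel}(\mu,\beta)$ denotes the distribution on $\mathbb{R}$ with density $\frac1\beta\exp\!\big(-\tfrac{x-\mu}{\beta}-e^{-(x-\mu)/\beta}\big)$; $\mathrm{MinGumbel}(\mu,\beta)$ denotes the distribution with density $\frac1\beta\exp\!\big(\tfrac{x-\mu}{\beta}-e^{(x-\mu)/\beta}\big)$. $\mathrm{LogSumExp}_{t\in T}(a_t)=\ln\sum_{t\in T}e^{a_t}$. $K_0$ is the modified Bessel function of the second kind of order $0$, $K_0(z)=\int_0^\infty e^{-z\cosh s}\,ds$. *)

theory Defs
  imports "HOL-Probability.Probability"
begin

definition maxgumbel_density :: "real \<Rightarrow> real \<Rightarrow> real \<Rightarrow> real" where
  "maxgumbel_density mu beta x = (1 / beta) * exp (- ((x - mu) / beta) - exp (- ((x - mu) / beta)))"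

definition mingumbel_density :: "real \<Rightarrow> real \<Rightarrow> real \<Rightarrow> real" where
  "mingumbel_density mu beta x = (1 / beta) * exp ((x - mu) / beta - exp ((x - mu) / beta))"

definition LogSumExp :: "'t set \<Rightarrow> ('t \<Rightarrow> real) \<Rightarrow> real" where
  "LogSumExp T a = ln (\<Sum>t\<in>T. exp (a t))"

definition BesselK0 :: "real \<Rightarrow> real" where
  "BesselK0 z = (LBINT s:{0..}. exp (- (z * cosh s)))"

definition gumbel_box_m :: "real \<Rightarrow> real \<Rightarrow> real" where
  "gumbel_box_m beta x = 2 * beta * BesselK0 (2 * exp (- x / (2 * beta)))"

end

theory Submission
  imports Defs "HOL-Real_Asymp.Real_Asymp"
begin

text \<open>The volume of the intersection is the integral over \<open>s \<in> \<real>\<^sup>d\<close> of the indicator that \<open>s\<close>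
  lies in every box, so by Tonelli the expected volume is the integral of the coverage probability
  \<open>P(s \<in> B\<^sup>t for all t)\<close>. By independence this factorises into MaxGumbel distribution functions
  and MinGumbel survival functions, and a product over \<open>t\<close> of MaxGumbel distribution functions at a
  common point is again one, with location \<open>beta LogSumExp (mu / beta)\<close> (dually for MinGumbel).
  Each coordinate thus contributes the integral of such a distribution function times such a
  survival function, which an affine substitution turns into the integral representation of
  \<open>K\<^sub>0\<close>.\<close>

definition maxgumbel_cdf :: "real \<Rightarrow> real \<Rightarrow> real \<Rightarrow> real" where
  "maxgumbel_cdf mu beta x = exp (- exp (- (x - mu) / beta))"

definition mingumbel_survival :: "real \<Rightarrow> real \<Rightarrow> real \<Rightarrow> real" where
  "mingumbel_survival mu beta x = exp (- exp ((x - mu) / beta))"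

lemma maxgumbel_cdf_nonneg [simp]: "maxgumbel_cdf mu beta x \<ge> 0"
  by (simp add: maxgumbel_cdf_def)

lemma mingumbel_survival_nonneg [simp]: "mingumbel_survival mu beta x \<ge> 0"
  by (simp add: mingumbel_survival_def)

lemma borel_measurable_maxgumbel_cdf [measurable]: "maxgumbel_cdf mu beta \<in> borel_measurable borel"
  unfolding maxgumbel_cdf_def by measurable

lemma borel_measurable_mingumbel_survival [measurable]:
  "mingumbel_survival mu beta \<in> borel_measurable borel"
  unfolding mingumbel_survival_def by measurable

lemma nn_integral_mingumbel_density_atLeast:
  assumes "beta > 0"
  shows "(\<integral>\<^sup>+x. ennreal (mingumbel_density mu beta x) * indicator {a..} x \<partial>lborel)
         = ennreal (mingumbel_survival mu beta a)"
proof -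
  have "(\<integral>\<^sup>+x. ennreal (mingumbel_density mu beta x) * indicator {a..} x \<partial>lborel)
        = ennreal (0 - (- mingumbel_survival mu beta a))"
  proof (rule nn_integral_FTC_atLeast)
    show "mingumbel_density mu beta \<in> borel_measurable borel"
      unfolding mingumbel_density_def by measurable
    fix x :: real
    show "0 \<le> mingumbel_density mu beta x"
      using assms by (simp add: mingumbel_density_def)
    have "((\<lambda>x. - mingumbel_survival mu beta x) has_real_derivative
           exp (- exp ((x - mu) / beta)) * (exp ((x - mu) / beta) / beta)) (at x)"
      using assms unfolding mingumbel_survival_def by (auto intro!: derivative_eq_intros)
    then show "((\<lambda>x. - mingumbel_survival mu beta x) has_real_derivative mingumbel_density mu beta x) (at x)"
      by (simp add: mingumbel_density_def exp_diff exp_add[symmetric] field_simps)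
  next
    show "((\<lambda>x. - mingumbel_survival mu beta x) \<longlongrightarrow> 0) at_top"
      using assms unfolding mingumbel_survival_def by real_asymp
  qed
  then show ?thesis by simp
qed

lemma nn_integral_maxgumbel_density_atMost:
  assumes "beta > 0"
  shows "(\<integral>\<^sup>+x. ennreal (maxgumbel_density mu beta x) * indicator {..a} x \<partial>lborel)
         = ennreal (maxgumbel_cdf mu beta a)"
proof -
  have "(\<integral>\<^sup>+x. ennreal (maxgumbel_density mu beta x) * indicator {..a} x \<partial>lborel)
     = ennreal \<bar>-1\<bar> * (\<integral>\<^sup>+x. ennreal (maxgumbel_density mu beta (0 + -1 * x))
                                  * indicator {..a} (0 + -1 * x) \<partial>lborel)"
    by (rule nn_integral_real_affine) (auto simp: maxgumbel_density_def)
  also have "\<dots> = (\<integral>\<^sup>+x. ennreal (mingumbel_density (-mu) beta x) * indicator {-a..} x \<partial>lborel)"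
    by (auto intro!: nn_integral_cong simp: maxgumbel_density_def mingumbel_density_def
        indicator_def minus_divide_left add.commute)
  finally show ?thesis
    using assms by (simp add: nn_integral_mingumbel_density_atLeast mingumbel_survival_def
        maxgumbel_cdf_def minus_divide_left)
qed

lemma emeasure_distributed_maxgumbel_atMost:
  assumes "distributed M lborel X (\<lambda>x. ennreal (maxgumbel_density mu beta x))" "beta > 0"
  shows "emeasure M (X -` {..a} \<inter> space M) = ennreal (maxgumbel_cdf mu beta a)"
  using assms by (simp add: distributed_emeasure nn_integral_maxgumbel_density_atMost)

lemma emeasure_distributed_mingumbel_atLeast:
  assumes "distributed M lborel X (\<lambda>x. ennreal (mingumbel_density mu beta x))" "beta > 0"
  shows "emeasure M (X -` {a..} \<inter> space M) = ennreal (mingumbel_survival mu beta a)"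
  using assms by (simp add: distributed_emeasure nn_integral_mingumbel_density_atLeast)

lemma sum_exp_eq_exp_LogSumExp:
  assumes "finite T" "T \<noteq> {}" "beta > 0"
  shows "(\<Sum>t\<in>T. exp ((c t - x) / beta)) = exp ((beta * LogSumExp T (\<lambda>t. c t / beta) - x) / beta)"
proof -
  have pos: "(\<Sum>t\<in>T. exp (c t / beta)) > 0"
    using assms by (intro sum_pos) auto
  have "(\<Sum>t\<in>T. exp ((c t - x) / beta)) = (\<Sum>t\<in>T. exp (c t / beta)) / exp (x / beta)"
    by (simp add: sum_divide_distrib diff_divide_distrib exp_diff)
  also have "\<dots> = exp (LogSumExp T (\<lambda>t. c t / beta) - x / beta)"
    using pos by (simp add: LogSumExp_def exp_diff)
  also have "LogSumExp T (\<lambda>t. c t / beta) - x / beta = (beta * LogSumExp T (\<lambda>t. c t / beta) - x) / beta"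
    using assms(3) by (simp add: diff_divide_distrib)
  finally show ?thesis .
qed

lemma prod_maxgumbel_cdf:
  assumes "finite T" "T \<noteq> {}" "beta > 0"
  shows "(\<Prod>t\<in>T. maxgumbel_cdf (m t) beta x)
         = maxgumbel_cdf (beta * LogSumExp T (\<lambda>t. m t / beta)) beta x"
proof -
  have "(\<Prod>t\<in>T. maxgumbel_cdf (m t) beta x) = exp (\<Sum>t\<in>T. - exp ((m t - x) / beta))"
    unfolding maxgumbel_cdf_def exp_sum[OF assms(1)] by (simp add: minus_divide_left)
  also have "\<dots> = exp (- exp ((beta * LogSumExp T (\<lambda>t. m t / beta) - x) / beta))"
    by (simp add: sum_negf sum_exp_eq_exp_LogSumExp[OF assms])
  finally show ?thesis
    by (simp add: maxgumbel_cdf_def minus_divide_left)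
qed

lemma prod_mingumbel_survival:
  assumes "finite T" "T \<noteq> {}" "beta > 0"
  shows "(\<Prod>t\<in>T. mingumbel_survival (m t) beta x)
         = mingumbel_survival (- beta * LogSumExp T (\<lambda>t. - m t / beta)) beta x"
proof -
  have "(\<Prod>t\<in>T. mingumbel_survival (m t) beta x) = exp (\<Sum>t\<in>T. - exp ((- m t - - x) / beta))"
    unfolding mingumbel_survival_def exp_sum[OF assms(1)] by simp
  also have "\<dots> = exp (- exp ((beta * LogSumExp T (\<lambda>t. - m t / beta) - - x) / beta))"
    by (simp only: sum_negf sum_exp_eq_exp_LogSumExp[OF assms])
  finally show ?thesis
    by (simp add: mingumbel_survival_def)
qed

lemma borel_measurable_cosh [measurable]: "(cosh :: real \<Rightarrow> real) \<in> borel_measurable borel"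
  by (intro borel_measurable_continuous_onI continuous_intros)

lemma nn_integral_lborel_even:
  fixes f :: "real \<Rightarrow> ennreal"
  assumes [measurable]: "f \<in> borel_measurable borel" and even: "\<And>x. f (- x) = f x"
  shows "(\<integral>\<^sup>+x. f x \<partial>lborel) = 2 * (\<integral>\<^sup>+x. f x * indicator {0..} x \<partial>lborel)"
proof -
  have "(\<integral>\<^sup>+x. f x \<partial>lborel)
        = (\<integral>\<^sup>+x. f x * indicator {0..} x \<partial>lborel) + (\<integral>\<^sup>+x. f x * indicator {..<0} x \<partial>lborel)"
    by (subst nn_integral_add[symmetric]) (auto intro!: nn_integral_cong simp: indicator_def)
  also have "(\<integral>\<^sup>+x. f x * indicator {..<0} x \<partial>lborel)
      = ennreal \<bar>-1\<bar> * (\<integral>\<^sup>+x. f (0 + -1 * x) * indicator {..<0} (0 + -1 * x) \<partial>lborel)"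
    by (rule nn_integral_real_affine) auto
  also have "\<dots> = (\<integral>\<^sup>+x. f x * indicator {0<..} x \<partial>lborel)"
    by (auto intro!: nn_integral_cong simp: even indicator_def)
  also have "\<dots> = (\<integral>\<^sup>+x. f x * indicator {0..} x \<partial>lborel)"
    by (intro nn_integral_cong_AE eventually_mono[OF AE_lborel_singleton[of 0]])
       (auto simp: indicator_def)
  finally show ?thesis by (simp add: mult_2)
qed

lemma BesselK0_nonneg: "BesselK0 z \<ge> 0"
  unfolding BesselK0_def set_lebesgue_integral_def
  by (intro Bochner_Integration.integral_nonneg) (auto simp: indicator_def)

lemma gumbel_box_m_nonneg: "beta \<ge> 0 \<Longrightarrow> gumbel_box_m beta x \<ge> 0"
  by (simp add: gumbel_box_m_def BesselK0_nonneg)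

lemma nn_integral_exp_neg_cosh_atLeast_0:
  assumes "z > 0"
  shows "(\<integral>\<^sup>+u. ennreal (exp (- (z * cosh u))) * indicator {0..} u \<partial>lborel) = ennreal (BesselK0 z)"
proof -
  let ?f = "\<lambda>u. indicator {0..} u * exp (- (z * cosh u))"
  let ?g = "\<lambda>u. ennreal (exp (- (z/2) * (1 + u))) * indicator {0..} u"
  have "(\<integral>\<^sup>+u. ?g u \<partial>lborel) = ennreal (0 - (- (2/z) * exp (- (z/2) * (1 + 0))))"
  proof (rule nn_integral_FTC_atLeast)
    fix x :: real
    show "((\<lambda>u. - (2/z) * exp (- (z/2) * (1 + u))) has_real_derivative exp (- (z/2) * (1 + x))) (at x)"
      using assms by (auto intro!: derivative_eq_intros)
  next
    show "((\<lambda>u. - (2/z) * exp (- (z/2) * (1 + u))) \<longlongrightarrow> 0) at_top"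
      using assms by real_asymp
  qed auto
  then have g_finite: "(\<integral>\<^sup>+u. ?g u \<partial>lborel) < \<infinity>"
    by simp
  have "exp (- (z * cosh u)) \<le> exp (- (z/2) * (1 + u))" for u
  proof -
    have "1 + u \<le> exp u + exp (- u)"
      using exp_ge_add_one_self[of u] exp_gt_zero[of "- u"] by linarith
    then have "z * ((1 + u) / 2) \<le> z * cosh u"
      using assms by (intro mult_left_mono) (auto simp: cosh_field_def divide_right_mono)
    then show ?thesis by simp
  qed
  then have "(\<integral>\<^sup>+u. ennreal (norm (?f u)) \<partial>lborel) \<le> (\<integral>\<^sup>+u. ?g u \<partial>lborel)"
    by (intro nn_integral_mono) (auto simp: indicator_def simp del: exp_le_cancel_iff)
  then have "integrable lborel ?f"
    using g_finite by (intro integrableI_bounded) auto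
  then have "(\<integral>\<^sup>+u. ennreal (?f u) \<partial>lborel) = ennreal (integral\<^sup>L lborel ?f)"
    by (intro nn_integral_eq_integral) auto
  then show ?thesis
    by (simp add: BesselK0_def set_lebesgue_integral_def indicator_mult_ennreal mult.commute)
qed

text \<open>The substitution \<open>s = (a + b)/2 + beta u\<close> turns the integrand into \<open>exp (- z cosh u)\<close>
  with \<open>z = 2 exp (- (b - a) / (2 beta))\<close>.\<close>
lemma nn_integral_maxgumbel_cdf_mingumbel_survival:
  assumes "beta > 0"
  shows "(\<integral>\<^sup>+s. ennreal (maxgumbel_cdf a beta s * mingumbel_survival b beta s) \<partial>lborel)
       = ennreal (gumbel_box_m beta (b - a))"
proof -
  define z where "z = 2 * exp (- (b - a) / (2 * beta))"
  let ?F = "\<lambda>s. ennreal (maxgumbel_cdf a beta s * mingumbel_survival b beta s)"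
  have "(\<integral>\<^sup>+s. ?F s \<partial>lborel) = ennreal \<bar>beta\<bar> * (\<integral>\<^sup>+u. ?F ((a + b)/2 + beta * u) \<partial>lborel)"
    using assms by (intro nn_integral_real_affine) (auto simp: maxgumbel_cdf_def mingumbel_survival_def)
  also have "(\<lambda>u. ?F ((a + b)/2 + beta * u)) = (\<lambda>u. ennreal (exp (- (z * cosh u))))"
  proof
    fix u :: real
    define c where "c = - (b - a) / (2 * beta)"
    have "- ((a + b)/2 + beta * u - a) / beta = c - u" "((a + b)/2 + beta * u - b) / beta = c + u"
      using assms by (simp_all add: c_def field_simps)
    moreover have "exp (c - u) + exp (c + u) = z * cosh u"
      by (simp add: z_def c_def cosh_def exp_diff exp_add exp_minus field_simps)
    ultimately show "?F ((a + b)/2 + beta * u) = ennreal (exp (- (z * cosh u)))"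
      by (simp add: maxgumbel_cdf_def mingumbel_survival_def exp_add[symmetric])
  qed
  also have "(\<integral>\<^sup>+u. ennreal (exp (- (z * cosh u))) \<partial>lborel)
      = 2 * ennreal (BesselK0 z)"
    by (subst nn_integral_lborel_even) (auto simp: nn_integral_exp_neg_cosh_atLeast_0 z_def)
  finally show ?thesis
    using assms BesselK0_nonneg[of z]
    by (simp add: gumbel_box_m_def z_def ennreal_mult' ennreal_mult mult.left_commute mult.assoc)
qed

lemma prod_indicator_eq_indicator_Inter:
  "finite T \<Longrightarrow> (\<Prod>t\<in>T. indicator (A t) x :: 'b :: comm_semiring_1) = indicator (\<Inter>t\<in>T. A t) x"
  by (induction T rule: finite_induct) (auto simp: indicator_inter_arith)

lemma Inter_atLeastAtMost_eq:
  fixes l u :: "'t \<Rightarrow> 'a :: linorder"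
  assumes "finite T" "T \<noteq> {}"
  shows "(\<Inter>t\<in>T. {l t..u t}) = {Max (l ` T)..Min (u ` T)}"
proof (intro set_eqI)
  fix x
  have "x \<in> (\<Inter>t\<in>T. {l t..u t}) \<longleftrightarrow> (\<forall>a\<in>l ` T. a \<le> x) \<and> (\<forall>a\<in>u ` T. x \<le> a)"
    by auto
  then show "x \<in> (\<Inter>t\<in>T. {l t..u t}) \<longleftrightarrow> x \<in> {Max (l ` T)..Min (u ` T)}"
    using assms by (simp add: Max_le_iff Min_ge_iff)
qed

lemma length_Inter_atLeastAtMost:
  assumes "finite T" "T \<noteq> {}"
  shows "ennreal (max (Min (u ` T) - Max (l ` T)) 0)
         = (\<integral>\<^sup>+x. (\<Prod>t\<in>T. indicator {l t..u t} x) \<partial>lborel)"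
  unfolding prod_indicator_eq_indicator_Inter[OF assms(1)] Inter_atLeastAtMost_eq[OF assms]
  by (simp add: emeasure_lborel_Icc_eq max_def)

lemma box_volume_eq_nn_integral_indicator:
  fixes l u :: "'t \<Rightarrow> 'j \<Rightarrow> real"
  assumes "finite J" "finite T" "T \<noteq> {}"
  shows "ennreal (\<Prod>j\<in>J. max (Min ((\<lambda>t. u t j) ` T) - Max ((\<lambda>t. l t j) ` T)) 0)
         = (\<integral>\<^sup>+s. (\<Prod>j\<in>J. \<Prod>t\<in>T. indicator {l t j..u t j} (s j)) \<partial>Pi\<^sub>M J (\<lambda>_. lborel))"
proof -
  interpret product_sigma_finite "\<lambda>_. lborel :: real measure"
    by unfold_locales
  have "ennreal (\<Prod>j\<in>J. max (Min ((\<lambda>t. u t j) ` T) - Max ((\<lambda>t. l t j) ` T)) 0)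
        = (\<Prod>j\<in>J. ennreal (max (Min ((\<lambda>t. u t j) ` T) - Max ((\<lambda>t. l t j) ` T)) 0))"
    by (rule prod_ennreal[symmetric]) simp
  also have "\<dots> = (\<Prod>j\<in>J. \<integral>\<^sup>+x. (\<Prod>t\<in>T. indicator {l t j..u t j} x) \<partial>lborel)"
    using assms(2,3) by (intro prod.cong refl length_Inter_atLeastAtMost)
  also have "\<dots> = (\<integral>\<^sup>+s. (\<Prod>j\<in>J. \<Prod>t\<in>T. indicator {l t j..u t j} (s j)) \<partial>Pi\<^sub>M J (\<lambda>_. lborel))"
    by (rule product_nn_integral_prod[symmetric]) (auto simp: assms(1))
  finally show ?thesis .
qed

lemma nn_integral_box_volume_eq_nn_integral_coverage:
  fixes L U :: "'t \<Rightarrow> 'j \<Rightarrow> 'a \<Rightarrow> real"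
  assumes "sigma_finite_measure M" "finite J" "finite T" "T \<noteq> {}"
    and L: "\<And>t j. t \<in> T \<Longrightarrow> j \<in> J \<Longrightarrow> L t j \<in> borel_measurable M"
    and U: "\<And>t j. t \<in> T \<Longrightarrow> j \<in> J \<Longrightarrow> U t j \<in> borel_measurable M"
  shows "(\<integral>\<^sup>+\<omega>. ennreal (\<Prod>j\<in>J. max (Min ((\<lambda>t. U t j \<omega>) ` T) - Max ((\<lambda>t. L t j \<omega>) ` T)) 0) \<partial>M)
       = (\<integral>\<^sup>+s. emeasure M {\<omega> \<in> space M. \<forall>j\<in>J. \<forall>t\<in>T. L t j \<omega> \<le> s j \<and> s j \<le> U t j \<omega>}
            \<partial>Pi\<^sub>M J (\<lambda>_. lborel))"
proof -
  define N where "N = Pi\<^sub>M J (\<lambda>_. lborel :: real measure)"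
  define C where "C \<omega> s = (\<Prod>j\<in>J. \<Prod>t\<in>T. indicator {L t j \<omega>..U t j \<omega>} (s j) :: ennreal)" for \<omega> s
  interpret N: product_sigma_finite "\<lambda>_. lborel :: real measure"
    by unfold_locales
  interpret pair_sigma_finite M N
    unfolding N_def pair_sigma_finite_def using assms(1,2) N.sigma_finite by auto
  have volume: "ennreal (\<Prod>j\<in>J. max (Min ((\<lambda>t. U t j \<omega>) ` T) - Max ((\<lambda>t. L t j \<omega>) ` T)) 0)
                = (\<integral>\<^sup>+s. C \<omega> s \<partial>N)" for \<omega>
    unfolding C_def N_def using assms(2-4) by (rule box_volume_eq_nn_integral_indicator)
  have "C \<omega> s = indicator {\<omega> \<in> space M. \<forall>j\<in>J. \<forall>t\<in>T. L t j \<omega> \<le> s j \<and> s j \<le> U t j \<omega>} \<omega>"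
    if "\<omega> \<in> space M" for \<omega> s
    using that assms(2,3) unfolding C_def
    by (simp add: prod_indicator_eq_indicator_Inter split: split_indicator)
  moreover have "{\<omega> \<in> space M. \<forall>j\<in>J. \<forall>t\<in>T. L t j \<omega> \<le> s j \<and> s j \<le> U t j \<omega>} \<in> sets M" for s
  proof (intro predE pred_intros_finite(3) assms(2,3))
    fix j t assume "j \<in> J" "t \<in> T"
    note [measurable] = L[OF \<open>t \<in> T\<close> \<open>j \<in> J\<close>] U[OF \<open>t \<in> T\<close> \<open>j \<in> J\<close>]
    show "Measurable.pred M (\<lambda>\<omega>. L t j \<omega> \<le> s j \<and> s j \<le> U t j \<omega>)"
      by measurable
  qed
  ultimately have coverage: "(\<integral>\<^sup>+\<omega>. C \<omega> s \<partial>M)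
      = emeasure M {\<omega> \<in> space M. \<forall>j\<in>J. \<forall>t\<in>T. L t j \<omega> \<le> s j \<and> s j \<le> U t j \<omega>}" for s
    by (simp cong: nn_integral_cong)
  have "(\<lambda>(\<omega>, s). C \<omega> s) \<in> borel_measurable (M \<Otimes>\<^sub>M N)"
    unfolding C_def split_beta'
  proof (intro borel_measurable_prod_ennreal)
    fix j t assume j: "j \<in> J" and t: "t \<in> T"
    note [measurable] = L[OF t j] U[OF t j]
    have [measurable]: "(\<lambda>x. snd x j) \<in> borel_measurable (M \<Otimes>\<^sub>M N)"
      unfolding N_def using j by measurable
    show "(\<lambda>x. indicator {L t j (fst x)..U t j (fst x)} (snd x j)) \<in> borel_measurable (M \<Otimes>\<^sub>M N)"
      unfolding indicator_def atLeastAtMost_iff by measurable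
  qed
  then have "(\<integral>\<^sup>+\<omega>. (\<integral>\<^sup>+s. C \<omega> s \<partial>N) \<partial>M) = (\<integral>\<^sup>+s. (\<integral>\<^sup>+\<omega>. C \<omega> s \<partial>M) \<partial>N)"
    by (rule Fubini'[symmetric])
  then show ?thesis
    by (simp add: volume coverage N_def)
qed

lemma ball_Plus_iff: "(\<forall>i\<in>A <+> B. P i) \<longleftrightarrow> (\<forall>a\<in>A. P (Inl a)) \<and> (\<forall>b\<in>B. P (Inr b))"
  by auto

lemma coverage_prob_independent_gumbel:
  fixes L U :: "'t \<Rightarrow> 'j \<Rightarrow> 'a \<Rightarrow> real"
  assumes "prob_space M" "beta > 0" "finite T" "T \<noteq> {}" "finite J" "J \<noteq> {}"
    and L: "\<And>t j. t \<in> T \<Longrightarrow> j \<in> J \<Longrightarrow>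
              distributed M lborel (L t j) (\<lambda>x. ennreal (maxgumbel_density (mulo t j) beta x))"
    and U: "\<And>t j. t \<in> T \<Longrightarrow> j \<in> J \<Longrightarrow>
              distributed M lborel (U t j) (\<lambda>x. ennreal (mingumbel_density (muhi t j) beta x))"
    and indep: "prob_space.indep_vars M (\<lambda>_. borel)
                  (\<lambda>i. case i of Inl (t, j) \<Rightarrow> L t j | Inr (t, j) \<Rightarrow> U t j) ((T \<times> J) <+> (T \<times> J))"
  shows "emeasure M {\<omega> \<in> space M. \<forall>j\<in>J. \<forall>t\<in>T. L t j \<omega> \<le> s j \<and> s j \<le> U t j \<omega>}
       = ennreal (\<Prod>j\<in>J. maxgumbel_cdf (beta * LogSumExp T (\<lambda>t. mulo t j / beta)) beta (s j)
                        * mingumbel_survival (- beta * LogSumExp T (\<lambda>t. - muhi t j / beta)) beta (s j))"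
proof -
  interpret prob_space M by fact
  define I where "I = (T \<times> J) <+> (T \<times> J)"
  define X :: "'t \<times> 'j + 't \<times> 'j \<Rightarrow> 'a \<Rightarrow> real"
    where "X i = (case i of Inl (t, j) \<Rightarrow> L t j | Inr (t, j) \<Rightarrow> U t j)" for i
  define A :: "'t \<times> 'j + 't \<times> 'j \<Rightarrow> real set"
    where "A i = (case i of Inl (t, j) \<Rightarrow> {..s j} | Inr (t, j) \<Rightarrow> {s j..})" for i
  define p :: "'t \<times> 'j + 't \<times> 'j \<Rightarrow> real"
    where "p i = (case i of Inl (t, j) \<Rightarrow> maxgumbel_cdf (mulo t j) beta (s j)
                          | Inr (t, j) \<Rightarrow> mingumbel_survival (muhi t j) beta (s j))" for i
  have "{\<omega> \<in> space M. \<forall>j\<in>J. \<forall>t\<in>T. L t j \<omega> \<le> s j \<and> s j \<le> U t j \<omega>} = (\<Inter>i\<in>I. X i -` A i \<inter> space M)"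
    using assms(4,6) by (auto simp: I_def X_def A_def ball_Plus_iff)
  moreover have "prob (\<Inter>i\<in>I. X i -` A i \<inter> space M) = (\<Prod>i\<in>I. prob (X i -` A i \<inter> space M))"
    using indep assms(3-6) unfolding I_def X_def
    by (intro indep_varsD_finite) (auto simp: A_def split: sum.split)
  moreover have "prob (X i -` A i \<inter> space M) = p i" if "i \<in> I" for i
    using that assms(2)
    by (auto simp: I_def X_def A_def p_def measure_def emeasure_distributed_maxgumbel_atMost[OF L]
        emeasure_distributed_mingumbel_atLeast[OF U])
  moreover have "(\<Prod>i\<in>I. p i) = (\<Prod>j\<in>J. (\<Prod>t\<in>T. maxgumbel_cdf (mulo t j) beta (s j))
                                        * (\<Prod>t\<in>T. mingumbel_survival (muhi t j) beta (s j)))"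
    using assms(3,5)
    by (simp add: I_def p_def prod.Plus prod.cartesian_product[symmetric] prod.swap[of _ T]
        prod.distrib)
  ultimately show ?thesis
    using assms(2-4)
    by (simp add: emeasure_eq_measure prod_maxgumbel_cdf prod_mingumbel_survival)
qed

theorem mainTheorem3:
  fixes M :: "'a measure" and T :: "'t set" and d :: nat and beta :: real
    and mulo muhi :: "'t \<Rightarrow> nat \<Rightarrow> real"
    and L U :: "'t \<Rightarrow> nat \<Rightarrow> 'a \<Rightarrow> real"
  assumes "prob_space M"
    and "beta > 0" and "d \<ge> 1" and "finite T" and "T \<noteq> {}"
    and "\<And>t j. t \<in> T \<Longrightarrow> j \<in> {1..d} \<Longrightarrow>
           distributed M lborel (L t j) (\<lambda>x. ennreal (maxgumbel_density (mulo t j) beta x))"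
    and "\<And>t j. t \<in> T \<Longrightarrow> j \<in> {1..d} \<Longrightarrow>
           distributed M lborel (U t j) (\<lambda>x. ennreal (mingumbel_density (muhi t j) beta x))"
    and "prob_space.indep_vars M (\<lambda>_. borel)
           (\<lambda>i. case i of Inl (t, j) \<Rightarrow> L t j | Inr (t, j) \<Rightarrow> U t j)
           ((T \<times> {1..d}) <+> (T \<times> {1..d}))"
  shows "(\<integral>\<^sup>+ \<omega>. ennreal (\<Prod>j\<in>{1..d}.
             max (Min ((\<lambda>t. U t j \<omega>) ` T) - Max ((\<lambda>t. L t j \<omega>) ` T)) 0) \<partial>M)
         = ennreal (\<Prod>j\<in>{1..d}. gumbel_box_m beta
             (- beta * LogSumExp T (\<lambda>t. - muhi t j / beta)
              - beta * LogSumExp T (\<lambda>t. mulo t j / beta)))"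
proof -
  interpret prob_space M by fact
  interpret product_sigma_finite "\<lambda>_. lborel :: real measure" by unfold_locales
  define a where "a j = beta * LogSumExp T (\<lambda>t. mulo t j / beta)" for j
  define b where "b j = - beta * LogSumExp T (\<lambda>t. - muhi t j / beta)" for j
  have "(\<integral>\<^sup>+ \<omega>. ennreal (\<Prod>j\<in>{1..d}.
             max (Min ((\<lambda>t. U t j \<omega>) ` T) - Max ((\<lambda>t. L t j \<omega>) ` T)) 0) \<partial>M)
      = (\<integral>\<^sup>+s. emeasure M {\<omega> \<in> space M. \<forall>j\<in>{1..d}. \<forall>t\<in>T. L t j \<omega> \<le> s j \<and> s j \<le> U t j \<omega>}
           \<partial>Pi\<^sub>M {1..d} (\<lambda>_. lborel))"
    using assms(4-7) distributed_measurable[OF assms(6)] distributed_measurable[OF assms(7)]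
    by (intro nn_integral_box_volume_eq_nn_integral_coverage sigma_finite_measure_axioms)
       (auto cong: measurable_cong_sets)
  also have "\<dots> = (\<integral>\<^sup>+s. (\<Prod>j\<in>{1..d}. ennreal (maxgumbel_cdf (a j) beta (s j)
                                                 * mingumbel_survival (b j) beta (s j))) \<partial>Pi\<^sub>M {1..d} (\<lambda>_. lborel))"
  proof -
    have "emeasure M {\<omega> \<in> space M. \<forall>j\<in>{1..d}. \<forall>t\<in>T. L t j \<omega> \<le> s j \<and> s j \<le> U t j \<omega>}
          = ennreal (\<Prod>j\<in>{1..d}. maxgumbel_cdf (a j) beta (s j) * mingumbel_survival (b j) beta (s j))"
      for s
      unfolding a_def b_def using assms(3) by (intro coverage_prob_independent_gumbel assms) auto
    then show ?thesis
      by (simp add: prod_ennreal)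
  qed
  also have "\<dots> = (\<Prod>j\<in>{1..d}. \<integral>\<^sup>+x. ennreal (maxgumbel_cdf (a j) beta x
                                               * mingumbel_survival (b j) beta x) \<partial>lborel)"
    by (rule product_nn_integral_prod) auto
  also have "\<dots> = (\<Prod>j\<in>{1..d}. ennreal (gumbel_box_m beta (b j - a j)))"
    using assms(2) by (simp add: nn_integral_maxgumbel_cdf_mingumbel_survival)
  finally show ?thesis
    using assms(2) by (simp add: prod_ennreal gumbel_box_m_nonneg a_def b_def)
qed

end
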